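(* Let $f:\Gamma_+\to\mathbb{R}$ be a smooth function which is homogeneous of degree one. Then $f\in\mathcal{C}_n$ if and only if the following hold everywhere on $\Gamma_+$: (1) $\dot f^i=\frac{\partial f}{\partial x_i}>0$ for each $i$; (2) the matrix $\ddot f^{ij}=\frac{\partial^2 f}{\partial x_i\partial x_j}$ is non-positive (negative semidefinite); (3) the matrix $\ddot f^{ij}+2\frac{\dot f^i}{x_i}\delta_{ij}$ is non-negative (positive semidefinite).
   Context: $\Gamma_+=\{x\in\mathbb{R}^n: x_i>0\ \forall i\}$. $\mathcal{C}_n$ is the class of functions $f:\Gamma_+\to\mathbb{R}$ which are $C^\infty$, homogeneous of degree one ($f(cx)=cf(x)$ for $c>0$), strictly monotone increasing ($\partial f/\partial x_i>0$ for each $i$), concave, and inverse-concave, meaning that $f^*(x_1,\dots,x_n)=-f(x_1^{-1},\dots,x_n^{-1})$ is concave on $\Gamma_+$. *)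

theory Defs
  imports "HOL-Analysis.Analysis"
begin

definition Gamma_plus :: "(real^'n) set" where
  "Gamma_plus = {x. \<forall>i. 0 < x $ i}"

definition partial :: "'n \<Rightarrow> (real^'n \<Rightarrow> real) \<Rightarrow> real^'n \<Rightarrow> real" where
  "partial i g x = deriv (\<lambda>t. g (x + t *\<^sub>R axis i 1)) 0"

fun iter_partial :: "'n list \<Rightarrow> (real^'n \<Rightarrow> real) \<Rightarrow> real^'n \<Rightarrow> real" where
  "iter_partial [] g = g"
| "iter_partial (i # is) g = partial i (iter_partial is g)"

definition smooth_on :: "(real^'n) set \<Rightarrow> (real^'n \<Rightarrow> real) \<Rightarrow> bool" where
  "smooth_on S g \<longleftrightarrow>
     (\<forall>is. continuous_on S (iter_partial is g) \<and>
        (\<forall>i. \<forall>x\<in>S. (\<lambda>t. iter_partial is g (x + t *\<^sub>R axis i 1)) differentiable (at 0)))"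

definition homogeneous_one :: "(real^'n) set \<Rightarrow> (real^'n \<Rightarrow> real) \<Rightarrow> bool" where
  "homogeneous_one S g \<longleftrightarrow> (\<forall>x\<in>S. \<forall>c>0. g (c *\<^sub>R x) = c * g x)"

definition inverse_concave :: "(real^'n \<Rightarrow> real) \<Rightarrow> bool" where
  "inverse_concave g \<longleftrightarrow> concave_on Gamma_plus (\<lambda>x. - g (\<chi> i. inverse (x $ i)))"

definition class_C :: "(real^'n \<Rightarrow> real) set" where
  "class_C = {g. smooth_on Gamma_plus g \<and> homogeneous_one Gamma_plus g
      \<and> (\<forall>x\<in>Gamma_plus. \<forall>i. 0 < partial i g x)
      \<and> concave_on Gamma_plus g \<and> inverse_concave g}"

end

theory Submission
  imports Defs
begin

text \<open>Both concavity conditions are second-order conditions along lines: on an open convex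
set, a function with second derivatives along lines is concave iff these are never positive.
For f itself the second derivative along x + s v is the Hessian form, which gives (2). For
f*(y) = -f(1/y) put x = 1/y and u_i = v_i / y_i^2: the curve s \<mapsto> 1/(y + s v) has velocity -u
and acceleration 2 v_i^2 / y_i^3 = 2 u_i^2 / x_i at s = 0, so minus the second derivative of f*
along y + s v is the quadratic form of (3) at u, and u ranges over all vectors. Since smooth_on only provides partial derivatives, the chain rule rests on Frechet
differentiability, which follows from the continuity of the partials.\<close>

lemma has_real_derivative_along_line_shift:
  fixes F :: "'a::real_vector \<Rightarrow> real"
  assumes "((\<lambda>s. F (x + t *\<^sub>R v + s *\<^sub>R v)) has_real_derivative D) (at 0)"
  shows "((\<lambda>s. F (x + s *\<^sub>R v)) has_real_derivative D) (at t)"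
proof -
  have shift: "x + t *\<^sub>R v + s *\<^sub>R v = x + (s + t) *\<^sub>R v" for s
    by (simp add: algebra_simps)
  have "((\<lambda>s. F (x + (s + t) *\<^sub>R v)) has_real_derivative D) (at 0)"
    using assms unfolding shift .
  then show ?thesis
    using DERIV_shift[where f="\<lambda>s. F (x + s *\<^sub>R v)" and x=0 and z=t] by simp
qed

lemma coordinate_increment_bound:
  fixes g :: "real^'n \<Rightarrow> real"
  assumes D: "\<And>i y. dist y x < r \<Longrightarrow> ((\<lambda>t. g (y + t *\<^sub>R axis i 1)) has_real_derivative D i y) (at 0)"
    and B: "\<And>i y. dist y x < r \<Longrightarrow> \<bar>D i y - D i x\<bar> \<le> \<epsilon>"
    and seg: "\<And>z. \<bar>z\<bar> \<le> \<bar>c\<bar> \<Longrightarrow> dist (y + z *\<^sub>R axis a 1) x < r"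
  shows "\<bar>g (y + c *\<^sub>R axis a 1) - g y - D a x * c\<bar> \<le> \<epsilon> * \<bar>c\<bar>"
proof -
  define \<psi> where "\<psi> s = g (y + s *\<^sub>R axis a 1) - s * D a x" for s
  let ?S = "{-\<bar>c\<bar>..\<bar>c\<bar>}"
  have "(\<psi> has_real_derivative D a (y + s *\<^sub>R axis a 1) - D a x) (at s within ?S)"
    if s: "s \<in> ?S" for s
  proof -
    have "((\<lambda>t. g (y + t *\<^sub>R axis a 1)) has_real_derivative D a (y + s *\<^sub>R axis a 1)) (at s)"
      by (rule has_real_derivative_along_line_shift, rule D, rule seg) (use s in auto)
    then have "(\<psi> has_real_derivative D a (y + s *\<^sub>R axis a 1) - D a x) (at s)"
      unfolding \<psi>_def by (auto intro!: derivative_eq_intros)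
    then show ?thesis
      by (rule has_field_derivative_at_within)
  qed
  moreover have "norm (D a (y + s *\<^sub>R axis a 1) - D a x) \<le> \<epsilon>" if "s \<in> ?S" for s
    using B seg that by auto
  ultimately have "norm (\<psi> c - \<psi> 0) \<le> \<epsilon> * norm (c - 0)"
    by (intro field_differentiable_bound[OF convex_real_interval(5)]) auto
  then show ?thesis by (simp add: \<psi>_def algebra_simps)
qed

lemma increment_bound_along_coordinates:
  fixes g :: "real^'n \<Rightarrow> real"
  assumes D: "\<And>i y. dist y x < r \<Longrightarrow> ((\<lambda>t. g (y + t *\<^sub>R axis i 1)) has_real_derivative D i y) (at 0)"
    and B: "\<And>i y. dist y x < r \<Longrightarrow> \<bar>D i y - D i x\<bar> \<le> \<epsilon>"
    and "finite F" and "\<And>i. i \<notin> F \<Longrightarrow> k $ i = 0" and "norm k < r"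
  shows "\<bar>g (x + k) - g x - (\<Sum>i\<in>F. D i x * k $ i)\<bar> \<le> \<epsilon> * (\<Sum>i\<in>F. \<bar>k $ i\<bar>)"
  using assms(3-)
proof (induction F arbitrary: k rule: finite_induct)
  case empty
  then have "k = 0" by (simp add: vec_eq_iff)
  then show ?case by simp
next
  case (insert a F)
  define k' where "k' = k - (k $ a) *\<^sub>R axis a 1"
  have k'_nth: "k' $ i = (if i = a then 0 else k $ i)" for i
    by (simp add: k'_def axis_def)
  have seg: "dist (x + k' + z *\<^sub>R axis a 1) x < r" if "\<bar>z\<bar> \<le> \<bar>k $ a\<bar>" for z
  proof -
    have "norm (k' + z *\<^sub>R axis a 1) \<le> norm k"
      by (rule norm_le_componentwise_cart) (use that in \<open>auto simp: k'_nth axis_def\<close>)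
    then show ?thesis using insert.prems by (simp add: dist_norm add.assoc)
  qed
  have step: "\<bar>g (x + k' + (k $ a) *\<^sub>R axis a 1) - g (x + k') - D a x * k $ a\<bar> \<le> \<epsilon> * \<bar>k $ a\<bar>"
    by (rule coordinate_increment_bound[OF D B seg])
  have "k' $ i = 0" if "i \<notin> F" for i
    using insert.prems(1)[of i] that by (simp add: k'_nth)
  moreover have "norm k' \<le> norm k"
    by (rule norm_le_componentwise_cart) (simp add: k'_nth)
  ultimately have IH: "\<bar>g (x + k') - g x - (\<Sum>i\<in>F. D i x * k' $ i)\<bar> \<le> \<epsilon> * (\<Sum>i\<in>F. \<bar>k' $ i\<bar>)"
    using insert.prems(2) by (intro insert.IH) auto
  have "(\<Sum>i\<in>F. D i x * k' $ i) = (\<Sum>i\<in>F. D i x * k $ i)" "(\<Sum>i\<in>F. \<bar>k' $ i\<bar>) = (\<Sum>i\<in>F. \<bar>k $ i\<bar>)"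
    using insert.hyps by (auto intro!: sum.cong simp: k'_nth)
  moreover have "g (x + k) = g (x + k' + (k $ a) *\<^sub>R axis a 1)"
    by (simp add: k'_def)
  ultimately have "g (x + k) - g x - (\<Sum>i\<in>insert a F. D i x * k $ i)
      = (g (x + k' + (k $ a) *\<^sub>R axis a 1) - g (x + k') - D a x * k $ a)
        + (g (x + k') - g x - (\<Sum>i\<in>F. D i x * k' $ i))"
    "\<epsilon> * (\<Sum>i\<in>insert a F. \<bar>k $ i\<bar>) = \<epsilon> * \<bar>k $ a\<bar> + \<epsilon> * (\<Sum>i\<in>F. \<bar>k' $ i\<bar>)"
    using insert.hyps by (simp_all add: distrib_left)
  then show ?case
    by (simp only:) (rule order_trans[OF abs_triangle_ineq add_mono[OF step IH]])
qed

lemma has_derivative_if_continuous_partials: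
  fixes g :: "real^'n \<Rightarrow> real"
  assumes "open S" "x \<in> S"
    and D: "\<And>i y. y \<in> S \<Longrightarrow> ((\<lambda>t. g (y + t *\<^sub>R axis i 1)) has_real_derivative D i y) (at 0)"
    and cont: "\<And>i. continuous_on S (D i)"
  shows "(g has_derivative (\<lambda>v. \<Sum>i\<in>UNIV. D i x * v $ i)) (at x)"
  unfolding has_derivative_at_alt
proof (intro conjI allI impI)
  show "bounded_linear (\<lambda>v. \<Sum>i\<in>UNIV. D i x * v $ i)"
    by (intro bounded_linear_sum bounded_linear_compose[OF bounded_linear_mult_right] bounded_linear_vec_nth)
  fix e :: real assume "0 < e"
  define \<epsilon> where "\<epsilon> = e / CARD('n)"
  have "0 < \<epsilon>" using \<open>0 < e\<close> by (simp add: \<epsilon>_def)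
  have "\<forall>\<^sub>F y in at x. \<forall>i. dist (D i y) (D i x) < \<epsilon>"
  proof (rule eventually_all_finite)
    fix i
    have "isCont (D i) x" using assms cont continuous_on_eq_continuous_at by blast
    then show "\<forall>\<^sub>F y in at x. dist (D i y) (D i x) < \<epsilon>"
      unfolding isCont_def using \<open>0 < \<epsilon>\<close> by (rule tendstoD)
  qed
  moreover have "\<forall>\<^sub>F y in at x. y \<in> S"
    using assms eventually_at_topological by blast
  ultimately have "\<forall>\<^sub>F y in at x. (\<forall>i. dist (D i y) (D i x) < \<epsilon>) \<and> y \<in> S"
    by (rule eventually_conj)
  then obtain r where "r > 0" and
    r: "\<And>y. y \<noteq> x \<Longrightarrow> dist y x < r \<Longrightarrow> (\<forall>i. dist (D i y) (D i x) < \<epsilon>) \<and> y \<in> S"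
    unfolding eventually_at by auto
  have ball_S: "y \<in> S" if "dist y x < r" for y
    using r[OF _ that] \<open>x \<in> S\<close> by (cases "y = x") auto
  have ball_B: "\<bar>D i y - D i x\<bar> \<le> \<epsilon>" if "dist y x < r" for i y
    using r[OF _ that] \<open>0 < \<epsilon>\<close> by (cases "y = x") (auto simp: dist_real_def less_imp_le)
  show "\<exists>r>0. \<forall>y. norm (y - x) < r \<longrightarrow>
      norm (g y - g x - (\<Sum>i\<in>UNIV. D i x * (y - x) $ i)) \<le> e * norm (y - x)"
  proof (intro exI[of _ r] conjI allI impI \<open>r > 0\<close>)
    fix y :: "real^'n" assume y: "norm (y - x) < r"
    have "\<bar>g (x + (y - x)) - g x - (\<Sum>i\<in>UNIV. D i x * (y - x) $ i)\<bar> \<le> \<epsilon> * (\<Sum>i\<in>UNIV. \<bar>(y - x) $ i\<bar>)"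
      by (rule increment_bound_along_coordinates[OF D ball_B]) (use y ball_S in auto)
    also have "\<dots> \<le> \<epsilon> * (\<Sum>i\<in>(UNIV::'n set). norm (y - x))"
      using \<open>0 < \<epsilon>\<close> by (intro mult_left_mono sum_mono component_le_norm_cart) auto
    also have "\<dots> = e * norm (y - x)" by (simp add: \<epsilon>_def)
    finally show "norm (g y - g x - (\<Sum>i\<in>UNIV. D i x * (y - x) $ i)) \<le> e * norm (y - x)"
      by simp
  qed
qed

lemma concave_on_deriv_antimono:
  fixes \<phi> :: "real \<Rightarrow> real"
  assumes "open I" "concave_on I \<phi>"
    and \<phi>': "\<And>s. s \<in> I \<Longrightarrow> (\<phi> has_real_derivative \<phi>' s) (at s)"
    and "a \<in> I" "b \<in> I" "a < b"
  shows "\<phi>' b \<le> \<phi>' a"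
proof -
  have cvx: "convex_on I (\<lambda>s. - \<phi> s)" and "connected I"
    using assms concave_on_imp_convex convex_connected by (auto simp: concave_on_def)
  have tangent: "- \<phi> y + \<phi> z \<ge> - \<phi>' z * (y - z)" if "y \<in> I" "z \<in> I" for y z
    using convex_on_imp_above_tangent[OF cvx \<open>connected I\<close>, of z y "- \<phi>' z"] that \<open>open I\<close>
      \<phi>'[THEN DERIV_minus, THEN has_field_derivative_at_within]
    by (simp add: interior_open)
  have "(\<phi>' b - \<phi>' a) * (b - a) \<le> 0"
    using tangent[of a b] tangent[of b a] assms by (simp add: algebra_simps)
  with \<open>a < b\<close> show ?thesis
    by (simp add: mult_le_0_iff)
qed

lemma concave_on_second_deriv_nonpos:
  fixes \<phi> :: "real \<Rightarrow> real"
  assumes "open I" "concave_on I \<phi>" "t \<in> I"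
    and "\<And>s. s \<in> I \<Longrightarrow> (\<phi> has_real_derivative \<phi>' s) (at s)"
    and "(\<phi>' has_real_derivative q) (at t)"
  shows "q \<le> 0"
proof (rule ccontr)
  assume "\<not> q \<le> 0"
  then obtain d where "d > 0" and d: "\<And>h. 0 < h \<Longrightarrow> h < d \<Longrightarrow> \<phi>' t < \<phi>' (t + h)"
    using DERIV_pos_inc_right[OF assms(5)] by force
  obtain e where "e > 0" "ball t e \<subseteq> I"
    using assms openE by blast
  define h where "h = min (d/2) (e/2)"
  have "0 < h" "h < d" "t + h \<in> I"
    using \<open>d > 0\<close> \<open>e > 0\<close> \<open>ball t e \<subseteq> I\<close> by (auto simp: h_def dist_real_def)
  then have "\<phi>' (t + h) \<le> \<phi>' t"
    by (intro concave_on_deriv_antimono[OF assms(1,2,4)]) (use assms in auto)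
  with d[OF \<open>0 < h\<close> \<open>h < d\<close>] show False
    by simp
qed

lemma concave_on_line:
  fixes F :: "'a::real_vector \<Rightarrow> real"
  assumes "concave_on S F"
  shows "concave_on {t. x + t *\<^sub>R v \<in> S} (\<lambda>t. F (x + t *\<^sub>R v))"
proof -
  have affine: "x + (u * a + w * b) *\<^sub>R v = u *\<^sub>R (x + a *\<^sub>R v) + w *\<^sub>R (x + b *\<^sub>R v)"
    if "u + w = 1" for u w a b
  proof -
    have "x = u *\<^sub>R x + w *\<^sub>R x" using that by (metis scaleR_add_left scaleR_one)
    then show ?thesis by (simp add: algebra_simps)
  qed
  have "convex S"
    using assms concave_on_imp_convex by blast
  then show ?thesis
    using assms unfolding concave_on_iff convex_def
    by (simp add: affine)
qed

lemma second_directional_deriv_nonpos_if_concave_on: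
  fixes F :: "'a::real_normed_vector \<Rightarrow> real"
  assumes "open S" "concave_on S F" "x \<in> S"
    and F': "\<And>x v. x \<in> S \<Longrightarrow> ((\<lambda>s. F (x + s *\<^sub>R v)) has_real_derivative F' x v) (at 0)"
    and F'': "((\<lambda>s. F' (x + s *\<^sub>R v) v) has_real_derivative F'') (at 0)"
  shows "F'' \<le> 0"
proof -
  have "open ((\<lambda>t::real. x + t *\<^sub>R v) -` S)"
    by (intro open_vimage \<open>open S\<close> continuous_intros)
  then have "open {t. x + t *\<^sub>R v \<in> S}"
    by (simp add: vimage_def)
  then show ?thesis
    using \<open>x \<in> S\<close>
    by (intro concave_on_second_deriv_nonpos[OF _ concave_on_line[OF \<open>concave_on S F\<close>] _ _ F''])
      (auto intro: has_real_derivative_along_line_shift F')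
qed

lemma concave_on_if_second_directional_deriv_nonpos:
  fixes F :: "'a::real_vector \<Rightarrow> real"
  assumes "convex S"
    and F': "\<And>x v. x \<in> S \<Longrightarrow> ((\<lambda>s. F (x + s *\<^sub>R v)) has_real_derivative F' x v) (at 0)"
    and F'': "\<And>x v. x \<in> S \<Longrightarrow> ((\<lambda>s. F' (x + s *\<^sub>R v) v) has_real_derivative F'' x v) (at 0)"
    and nonpos: "\<And>x v. x \<in> S \<Longrightarrow> F'' x v \<le> 0"
  shows "concave_on S F"
  unfolding concave_on_iff
proof (intro conjI \<open>convex S\<close> ballI allI impI)
  fix x y u w assume "x \<in> S" "y \<in> S" and uw: "0 \<le> u" "0 \<le> w" "u + w = (1::real)"
  have segment: "x + t *\<^sub>R (y - x) \<in> S" if "t \<in> {0..1}" for t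
  proof -
    have "x + t *\<^sub>R (y - x) = (1 - t) *\<^sub>R x + t *\<^sub>R y" by (simp add: algebra_simps)
    then show ?thesis using \<open>convex S\<close> \<open>x \<in> S\<close> \<open>y \<in> S\<close> that unfolding convex_def by auto
  qed
  have "concave_on {0..1} (\<lambda>t. F (x + t *\<^sub>R (y - x)))"
    by (rule f''_le0_imp_concave[where f'="\<lambda>t. F' (x + t *\<^sub>R (y - x)) (y - x)"
          and f''="\<lambda>t. F'' (x + t *\<^sub>R (y - x)) (y - x)"])
      (use segment nonpos in \<open>auto intro!: has_real_derivative_along_line_shift F' F''\<close>)
  then have "(1 - w) * F (x + 0 *\<^sub>R (y - x)) + w * F (x + 1 *\<^sub>R (y - x))
      \<le> F (x + ((1 - w) *\<^sub>R 0 + w *\<^sub>R 1) *\<^sub>R (y - x))"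
    using uw by (intro concave_onD) auto
  moreover have "x + w *\<^sub>R (y - x) = u *\<^sub>R x + w *\<^sub>R y" "u = 1 - w"
    using uw(3) by (auto simp: algebra_simps simp flip: scaleR_add_left)
  ultimately show "u * F x + w * F y \<le> F (u *\<^sub>R x + w *\<^sub>R y)"
    by simp
qed

lemma concave_on_iff_second_directional_deriv:
  fixes F :: "'a::real_normed_vector \<Rightarrow> real"
  assumes "open S" "convex S"
    and F': "\<And>x v. x \<in> S \<Longrightarrow> ((\<lambda>s. F (x + s *\<^sub>R v)) has_real_derivative F' x v) (at 0)"
    and F'': "\<And>x v. x \<in> S \<Longrightarrow> ((\<lambda>s. F' (x + s *\<^sub>R v) v) has_real_derivative F'' x v) (at 0)"
  shows "concave_on S F \<longleftrightarrow> (\<forall>x\<in>S. \<forall>v. F'' x v \<le> 0)"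
  using second_directional_deriv_nonpos_if_concave_on[OF \<open>open S\<close> _ _ F' F'']
    concave_on_if_second_directional_deriv_nonpos[OF \<open>convex S\<close> F' F'']
  by blast

lemma has_vector_derivative_vec_componentwise:
  fixes c :: "real \<Rightarrow> real^'n"
  assumes "\<And>i. ((\<lambda>s. c s $ i) has_real_derivative c' $ i) (at t)"
  shows "(c has_vector_derivative c') (at t)"
  unfolding has_vector_derivative_def
proof (rule iffD2[OF has_derivative_componentwise_within], rule ballI)
  fix b :: "real^'n" assume "b \<in> Basis"
  then obtain i where b: "b = axis i 1"
    unfolding Basis_vec_def by auto
  have "(\<lambda>h. h * c' $ i) = (*) (c' $ i)"
    by (auto simp: fun_eq_iff)
  then have "((\<lambda>s. c s $ i) has_derivative (\<lambda>h. h * c' $ i)) (at t)"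
    using assms[of i] by (simp add: has_field_derivative_def)
  then show "((\<lambda>s. c s \<bullet> b) has_derivative (\<lambda>h. h *\<^sub>R c' \<bullet> b)) (at t)"
    by (simp add: b inner_axis)
qed

lemma iter_partial_append: "iter_partial (is @ [j]) g = iter_partial is (partial j g)"
  by (induction "is") simp_all

lemma smooth_on_partial: "smooth_on S g \<Longrightarrow> smooth_on S (partial j g)"
  unfolding smooth_on_def by (metis iter_partial_append)

lemma smooth_on_has_partial_derivative:
  assumes "smooth_on S g" "y \<in> S"
  shows "((\<lambda>t. g (y + t *\<^sub>R axis i 1)) has_real_derivative partial i g y) (at 0)"
proof -
  have "(\<lambda>t. iter_partial [] g (y + t *\<^sub>R axis i 1)) differentiable (at 0)"
    using assms unfolding smooth_on_def by blast
  then show ?thesis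
    by (simp add: partial_def DERIV_deriv_iff_real_differentiable)
qed

lemma smooth_on_continuous_on_partial: "smooth_on S g \<Longrightarrow> continuous_on S (partial i g)"
  unfolding smooth_on_def by (metis iter_partial.simps)

definition gradient_form :: "(real^'n \<Rightarrow> real) \<Rightarrow> real^'n \<Rightarrow> real^'n \<Rightarrow> real" where
  "gradient_form g x v = (\<Sum>i\<in>UNIV. partial i g x * v $ i)"

definition hessian_form :: "(real^'n \<Rightarrow> real) \<Rightarrow> real^'n \<Rightarrow> real^'n \<Rightarrow> real" where
  "hessian_form g x v = (\<Sum>i\<in>UNIV. \<Sum>j\<in>UNIV. partial i (partial j g) x * v $ i * v $ j)"

lemma gradient_form_uminus [simp]: "gradient_form g x (- v) = - gradient_form g x v"
  by (simp add: gradient_form_def sum_negf)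

lemma hessian_form_uminus [simp]: "hessian_form g x (- v) = hessian_form g x v"
  by (simp add: hessian_form_def)

lemma smooth_on_has_derivative:
  assumes "smooth_on S g" "open S" "x \<in> S"
  shows "(g has_derivative gradient_form g x) (at x)"
  unfolding gradient_form_def
  using assms smooth_on_has_partial_derivative smooth_on_continuous_on_partial
  by (intro has_derivative_if_continuous_partials) blast+

lemma smooth_on_chain_rule:
  fixes c :: "real \<Rightarrow> real^'n"
  assumes "smooth_on S g" "open S" "c t \<in> S" "(c has_vector_derivative c') (at t)"
  shows "((\<lambda>s. g (c s)) has_real_derivative gradient_form g (c t) c') (at t)"
proof -
  have "((g \<circ> c) has_derivative (gradient_form g (c t) \<circ> (\<lambda>s. s *\<^sub>R c'))) (at t)"
    using assms(4) smooth_on_has_derivative[OF assms(1-3)]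
    unfolding has_vector_derivative_def by (rule diff_chain_at)
  moreover have "gradient_form g (c t) \<circ> (\<lambda>s. s *\<^sub>R c') = (*) (gradient_form g (c t) c')"
    by (auto simp: gradient_form_def fun_eq_iff sum_distrib_left algebra_simps)
  ultimately show ?thesis
    unfolding has_field_derivative_def by (simp add: o_def)
qed

lemma smooth_on_second_chain_rule:
  fixes c c' :: "real \<Rightarrow> real^'n"
  assumes "smooth_on S g" "open S" "c t \<in> S" "(c has_vector_derivative c' t) (at t)"
    and "\<And>j. ((\<lambda>s. c' s $ j) has_real_derivative c'' $ j) (at t)"
  shows "((\<lambda>s. gradient_form g (c s) (c' s)) has_real_derivative
      gradient_form g (c t) c'' + hessian_form g (c t) (c' t)) (at t)"
proof -
  have "((\<lambda>s. \<Sum>j\<in>UNIV. partial j g (c s) * c' s $ j) has_real_derivative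
      (\<Sum>j\<in>UNIV. partial j g (c t) * c'' $ j + gradient_form (partial j g) (c t) (c' t) * c' t $ j)) (at t)"
    by (intro DERIV_sum DERIV_mult' smooth_on_chain_rule[OF smooth_on_partial[OF assms(1)] assms(2-4)] assms(5))
  moreover have "(\<Sum>j\<in>UNIV. partial j g (c t) * c'' $ j + gradient_form (partial j g) (c t) (c' t) * c' t $ j)
      = gradient_form g (c t) c'' + hessian_form g (c t) (c' t)"
    unfolding gradient_form_def hessian_form_def sum.distrib sum_distrib_right
    by (subst sum.swap) (simp add: mult.assoc)
  ultimately show ?thesis
    by (simp add: gradient_form_def)
qed

lemma concave_on_iff_hessian_nonpos:
  fixes g :: "real^'n \<Rightarrow> real"
  assumes "smooth_on S g" "open S" "convex S"
  shows "concave_on S g \<longleftrightarrow> (\<forall>x\<in>S. \<forall>v. hessian_form g x v \<le> 0)"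
proof (rule concave_on_iff_second_directional_deriv[OF assms(2,3)])
  fix x v :: "real^'n" assume "x \<in> S"
  have line: "((\<lambda>s. x + s *\<^sub>R v) has_vector_derivative v) (at 0)"
    by (auto intro!: derivative_eq_intros)
  show "((\<lambda>s. g (x + s *\<^sub>R v)) has_real_derivative gradient_form g x v) (at 0)"
    using smooth_on_chain_rule[OF assms(1,2) _ line] \<open>x \<in> S\<close> by simp
  show "((\<lambda>s. gradient_form g (x + s *\<^sub>R v) v) has_real_derivative hessian_form g x v) (at 0)"
    using smooth_on_second_chain_rule[where c'="\<lambda>_. v" and c''=0, OF assms(1,2) _ line] \<open>x \<in> S\<close>
    by (simp add: gradient_form_def)
qed

lemma open_Gamma_plus: "open (Gamma_plus :: (real^'n) set)"
proof -
  have "Gamma_plus = (\<Inter>i. (\<lambda>x::real^'n. x $ i) -` {0<..})"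
    by (auto simp: Gamma_plus_def)
  moreover have "open (\<Inter>i. (\<lambda>x::real^'n. x $ i) -` {0<..})"
    using open_vimage_vec_nth[OF open_greaterThan] by (intro open_INT) auto
  ultimately show ?thesis
    by simp
qed

lemma convex_Gamma_plus: "convex (Gamma_plus :: (real^'n) set)"
proof -
  have "0 < u * a + v * b" if "0 < a" "0 < b" "0 \<le> u" "0 \<le> v" "u + v = 1" for a b u v :: real
    using that by (cases "u = 0") (auto intro: add_pos_nonneg)
  then show ?thesis
    unfolding convex_def Gamma_plus_def by simp
qed

lemma Gamma_plus_nth_pos: "x \<in> Gamma_plus \<Longrightarrow> 0 < x $ i"
  by (simp add: Gamma_plus_def)

definition inverse_vec :: "real^'n \<Rightarrow> real^'n" where
  "inverse_vec x = (\<chi> i. inverse (x $ i))"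

lemma inverse_vec_Gamma_plus: "x \<in> Gamma_plus \<Longrightarrow> inverse_vec x \<in> Gamma_plus"
  by (simp add: inverse_vec_def Gamma_plus_def)

lemma inverse_vec_inverse_vec [simp]: "inverse_vec (inverse_vec x) = x"
  by (simp add: inverse_vec_def vec_eq_iff)

lemma inverse_concave_iff_along_lines:
  fixes g :: "real^'n \<Rightarrow> real"
  assumes "smooth_on Gamma_plus g"
  shows "inverse_concave g \<longleftrightarrow> (\<forall>p\<in>Gamma_plus. \<forall>v.
    0 \<le> gradient_form g (inverse_vec p) (\<chi> j. 2 * (v $ j)^2 / (p $ j)^3)
      + hessian_form g (inverse_vec p) (\<chi> j. v $ j / (p $ j)^2))"
proof -
  define w where "w p v = (\<chi> j. v $ j / (p $ j)^2)" for p v :: "real^'n"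
  define acc where "acc p v = (\<chi> j. 2 * (v $ j)^2 / (p $ j)^3)" for p v :: "real^'n"
  have "inverse_concave g \<longleftrightarrow> concave_on Gamma_plus (\<lambda>p. - g (inverse_vec p))"
    by (simp add: inverse_concave_def inverse_vec_def)
  also have "\<dots> \<longleftrightarrow> (\<forall>p\<in>Gamma_plus. \<forall>v.
      - (gradient_form g (inverse_vec p) (acc p v) + hessian_form g (inverse_vec p) (w p v)) \<le> 0)"
  proof (rule concave_on_iff_second_directional_deriv[where F'="\<lambda>p v. gradient_form g (inverse_vec p) (w p v)",
        OF open_Gamma_plus convex_Gamma_plus])
    fix p v :: "real^'n" assume p: "p \<in> Gamma_plus"
    have pos: "0 < p $ j" for j
      using p by (rule Gamma_plus_nth_pos)
    then have nonzero: "p $ j \<noteq> 0" for j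
      by (rule dual_order.strict_implies_not_eq)
    define c where "c s = inverse_vec (p + s *\<^sub>R v)" for s
    define c' where "c' s = - w (p + s *\<^sub>R v) v" for s
    have "c 0 \<in> Gamma_plus"
      using p by (simp add: c_def inverse_vec_Gamma_plus)
    moreover have "(c has_vector_derivative c' 0) (at 0)"
      by (intro has_vector_derivative_vec_componentwise)
        (auto intro!: derivative_eq_intros simp: c_def c'_def w_def inverse_vec_def nonzero field_simps power2_eq_square)
    moreover have "((\<lambda>s. c' s $ j) has_real_derivative acc p v $ j) (at 0)" for j
      using pos[of j]
      by (auto intro!: derivative_eq_intros simp: c'_def w_def acc_def field_simps power2_eq_square power3_eq_cube)
    ultimately have first: "((\<lambda>s. g (c s)) has_real_derivative gradient_form g (c 0) (c' 0)) (at 0)"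
      and second: "((\<lambda>s. gradient_form g (c s) (c' s)) has_real_derivative
          gradient_form g (c 0) (acc p v) + hessian_form g (c 0) (c' 0)) (at 0)"
      by (auto intro: smooth_on_chain_rule smooth_on_second_chain_rule assms open_Gamma_plus)
    show "((\<lambda>s. - g (inverse_vec (p + s *\<^sub>R v))) has_real_derivative
        gradient_form g (inverse_vec p) (w p v)) (at 0)"
      using DERIV_minus[OF first] by (simp add: c_def c'_def)
    show "((\<lambda>s. gradient_form g (inverse_vec (p + s *\<^sub>R v)) (w (p + s *\<^sub>R v) v)) has_real_derivative
        - (gradient_form g (inverse_vec p) (acc p v) + hessian_form g (inverse_vec p) (w p v))) (at 0)"
      using DERIV_minus[OF second] by (simp add: c_def c'_def)
  qed
  finally show ?thesis
    unfolding w_def acc_def by (simp only: neg_le_0_iff_le)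
qed

lemma inverse_vec_change_of_variables:
  assumes "p \<in> Gamma_plus" "x = inverse_vec p" "u = (\<chi> j. v $ j / (p $ j)^2)"
  shows "gradient_form g (inverse_vec p) (\<chi> j. 2 * (v $ j)^2 / (p $ j)^3)
      + hessian_form g (inverse_vec p) (\<chi> j. v $ j / (p $ j)^2)
    = hessian_form g x u + (\<Sum>i\<in>UNIV. 2 * partial i g x / x $ i * (u $ i)^2)"
proof -
  have "0 < p $ j" for j
    using assms(1) by (rule Gamma_plus_nth_pos)
  then have "gradient_form g x (\<chi> j. 2 * (v $ j)^2 / (p $ j)^3)
      = (\<Sum>i\<in>UNIV. 2 * partial i g x / x $ i * (u $ i)^2)"
    unfolding gradient_form_def assms(2,3)
    by (intro sum.cong) (auto simp: inverse_vec_def field_simps power2_eq_square power3_eq_cube)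
  then show ?thesis
    using assms(2,3) by simp
qed

lemma inverse_concave_iff:
  fixes g :: "real^'n \<Rightarrow> real"
  assumes "smooth_on Gamma_plus g"
  shows "inverse_concave g \<longleftrightarrow>
    (\<forall>x\<in>Gamma_plus. \<forall>u. 0 \<le> hessian_form g x u + (\<Sum>i\<in>UNIV. 2 * partial i g x / x $ i * (u $ i)^2))"
proof -
  have every_vector_attained: "u = (\<chi> j. v $ j / (inverse_vec x $ j)^2)"
    if "x \<in> Gamma_plus" "v = (\<chi> j. u $ j / (x $ j)^2)" for x u v
  proof -
    have "x $ j \<noteq> 0" for j
      using Gamma_plus_nth_pos[OF that(1)] by (rule dual_order.strict_implies_not_eq)
    then show ?thesis
      by (simp add: that(2) inverse_vec_def vec_eq_iff field_simps)
  qed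
  show ?thesis
    unfolding inverse_concave_iff_along_lines[OF assms]
  proof (intro iffI ballI allI)
    fix x u :: "real^'n"
    assume "\<forall>p\<in>Gamma_plus. \<forall>v. 0 \<le> gradient_form g (inverse_vec p) (\<chi> j. 2 * (v $ j)^2 / (p $ j)^3)
        + hessian_form g (inverse_vec p) (\<chi> j. v $ j / (p $ j)^2)"
      and x: "x \<in> Gamma_plus"
    from this(1)[rule_format, OF inverse_vec_Gamma_plus[OF x], of "\<chi> j. u $ j / (x $ j)^2"]
    show "0 \<le> hessian_form g x u + (\<Sum>i\<in>UNIV. 2 * partial i g x / x $ i * (u $ i)^2)"
      using inverse_vec_change_of_variables[OF inverse_vec_Gamma_plus[OF x] _ every_vector_attained[OF x refl]]
      by simp
  next
    fix p v :: "real^'n"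
    assume "\<forall>x\<in>Gamma_plus. \<forall>u. 0 \<le> hessian_form g x u + (\<Sum>i\<in>UNIV. 2 * partial i g x / x $ i * (u $ i)^2)"
      and p: "p \<in> Gamma_plus"
    from this(1)[rule_format, OF inverse_vec_Gamma_plus[OF p], of "\<chi> j. v $ j / (p $ j)^2"]
    show "0 \<le> gradient_form g (inverse_vec p) (\<chi> j. 2 * (v $ j)^2 / (p $ j)^3)
        + hessian_form g (inverse_vec p) (\<chi> j. v $ j / (p $ j)^2)"
      using inverse_vec_change_of_variables[OF p refl refl] by simp
  qed
qed

lemma sum_hessian_plus_diagonal:
  "(\<Sum>i\<in>UNIV. \<Sum>j\<in>UNIV. (partial i (partial j g) x + (if i = j then d i else 0)) * v $ i * v $ j)
    = hessian_form g x v + (\<Sum>i\<in>UNIV. d i * (v $ i)^2)"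
proof -
  have "(\<Sum>j\<in>UNIV. (if i = j then d i else 0) * v $ i * v $ j) = d i * (v $ i)^2" for i
    by (simp add: power2_eq_square if_distrib[of "\<lambda>a. a * _"] cong: if_cong)
  then show ?thesis
    by (simp add: hessian_form_def distrib_right sum.distrib)
qed

theorem theorem2p1:
  fixes f :: "real^'n \<Rightarrow> real"
  assumes "smooth_on Gamma_plus f"
    and "homogeneous_one Gamma_plus f"
  shows "f \<in> class_C \<longleftrightarrow>
    (\<forall>x\<in>Gamma_plus.
       (\<forall>i. 0 < partial i f x) \<and>
       (\<forall>v::real^'n. (\<Sum>i\<in>UNIV. \<Sum>j\<in>UNIV. partial i (partial j f) x * v $ i * v $ j) \<le> 0) \<and>
       (\<forall>v::real^'n. 0 \<le> (\<Sum>i\<in>UNIV. \<Sum>j\<in>UNIV.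
           (partial i (partial j f) x + (if i = j then 2 * partial i f x / x $ i else 0))
             * v $ i * v $ j)))"
  unfolding class_C_def mem_Collect_eq sum_hessian_plus_diagonal
    concave_on_iff_hessian_nonpos[OF assms(1) open_Gamma_plus convex_Gamma_plus]
    inverse_concave_iff[OF assms(1)] hessian_form_def
  using assms by blast

end
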